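(* Let $\hat T$ be a virtual tree with $n$ vertices (each vertex $v$ having current children $C(v)$, $|C(v)|\le 2$, and appended children $A(v)$, $|A(v)|\le 2$) stored in an energy-bound light-first order. Then local messaging in $\hat T$ — where in a local broadcast each vertex (1) sends its message to its current children and (2) unless it is the root, waits until it receives the message from its parent and propagates it to its appended children, and local reduce is defined analogously with reduction — takes $O(n)$ total energy and $O(\log n)$ depth.
   Context: Processors sit on the cells of a 2D grid enumerated by a space-filling curve $K$; sending a message costs energy equal to the Manhattan distance between sender and receiver; depth is the number of parallel communication rounds. Each vertex is stored in one processor at position $p_v$. For a rooted tree, $s(v)$ is the size of the subtree rooted at $v$; the tree is in ($K$-)light-first order if for every vertex $v$ its children can be indexed $u_1,\dots,u_m$ with $s(u_1)\le\dots\le s(u_m)$ so that $u_i$ is at position $p_v+1+\sum_{j<i}s(u_j)$. A light-first order is energy-bound if, for every rooted tree with degree bounded by a constant and $n$ vertices stored in it, the total energy of every vertex sending one message to each of its children is $O(n)$. A virtual tree is a rooted tree in which the children of each vertex $v$ are split into an ordered list $C(v)$ of current children followed by an ordered list $A(v)$ of appended children (as produced from an arbitrary-degree tree by recursively regrouping children: $C(v)=(c_1,\dots,c_d)$ becomes $(c_1,c_{\lfloor d/2\rfloor+1})$ with $A(c_1)=(c_2,\dots,c_{\lfloor d/2\rfloor})$, $A(c_{\lfloor d/2\rfloor+1})=(c_{\lfloor d/2\rfloor+2},\dots,c_d)$, and likewise for $A(v)$). Local broadcast: each vertex's message is delivered to all its children. Local reduce: each vertex receives the reduction, under an associative operation,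 of messages from its children. *)

theory Defs
  imports Complex_Main
begin

text \<open>Processors sit on the cells of the (quarter-infinite) 2D grid nat x nat; the
  space-filling curve K enumerates the cells: processor/position i is the cell K i.
  Energy of a message = Manhattan distance between sender and receiver cell.\<close>

definition manhattan :: "nat \<times> nat \<Rightarrow> nat \<times> nat \<Rightarrow> nat" where
  "manhattan a b = nat \<bar>int (fst a) - int (fst b)\<bar> + nat \<bar>int (snd a) - int (snd b)\<bar>"

definition tree_edges :: "(nat \<Rightarrow> nat list) \<Rightarrow> (nat \<times> nat) set" where
  "tree_edges ch = {(v, u). u \<in> set (ch v)}"

definition rooted_tree :: "nat set \<Rightarrow> nat \<Rightarrow> (nat \<Rightarrow> nat list) \<Rightarrow> bool" where
  "rooted_tree V r ch \<longleftrightarrow>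
     finite V \<and> r \<in> V \<and>
     (\<forall>v. distinct (ch v) \<and> set (ch v) \<subseteq> V) \<and>
     (\<forall>v. v \<notin> V \<longrightarrow> ch v = []) \<and>
     (\<forall>v. r \<notin> set (ch v)) \<and>
     (\<forall>u\<in>V - {r}. \<exists>!v. u \<in> set (ch v)) \<and>
     (\<forall>u\<in>V. (r, u) \<in> (tree_edges ch)\<^sup>*)"

definition subtree_size :: "(nat \<Rightarrow> nat list) \<Rightarrow> nat \<Rightarrow> nat" where
  "subtree_size ch v = card {w. (v, w) \<in> (tree_edges ch)\<^sup>*}"

definition light_first :: "nat set \<Rightarrow> (nat \<Rightarrow> nat list) \<Rightarrow> (nat \<Rightarrow> nat) \<Rightarrow> bool" where
  "light_first V ch p \<longleftrightarrow>
     (\<forall>v\<in>V. \<exists>us. distinct us \<and> set us = set (ch v) \<and>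
        sorted (map (subtree_size ch) us) \<and>
        (\<forall>i<length us. p (us ! i) = p v + 1 + (\<Sum>j<i. subtree_size ch (us ! j))))"

definition tree_energy :: "(nat \<Rightarrow> nat \<times> nat) \<Rightarrow> nat set \<Rightarrow> (nat \<Rightarrow> nat list) \<Rightarrow> (nat \<Rightarrow> nat) \<Rightarrow> nat" where
  "tree_energy K V ch p = (\<Sum>v\<in>V. \<Sum>u\<in>set (ch v). manhattan (K (p v)) (K (p u)))"

definition energy_bound :: "(nat \<Rightarrow> nat \<times> nat) \<Rightarrow> bool" where
  "energy_bound K \<longleftrightarrow>
     (\<forall>D::nat. \<exists>c::real. \<forall>V r ch p.
        rooted_tree V r ch \<and> (\<forall>v. length (ch v) \<le> D) \<and> light_first V ch p \<longrightarrow>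
        real (tree_energy K V ch p) \<le> c * real (card V))"

text \<open>Recursive regrouping of an ordered sibling list (c_1..c_d): if d \<le> 2 it is kept;
  otherwise only (c_1, c_{floor(d/2)+1}) is kept, (c_2..c_{floor(d/2)}) becomes the appended
  list of c_1 and (c_{floor(d/2)+2}..c_d) the appended list of c_{floor(d/2)+1}, and these
  appended lists are regrouped likewise.  kept L is the kept part; appended L x is the
  (regrouped) appended-children list that x obtains from the regrouping of L.\<close>

definition kept :: "'a list \<Rightarrow> 'a list" where
  "kept L = (if length L \<le> 2 then L else [L ! 0, L ! (length L div 2)])"

function appended :: "'a list \<Rightarrow> 'a \<Rightarrow> 'a list" where
  "appended L x =
     (if length L \<le> 2 then []
      else (let h = length L div 2; L1 = take (h - 1) (drop 1 L); L2 = drop (h + 1) L in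
            if x = L ! 0 then kept L1
            else if x = L ! h then kept L2
            else appended L1 x @ appended L2 x))"
  by pat_completeness auto
termination
  by (relation "measure (length \<circ> fst)") auto

declare appended.simps [simp del]

definition tparent :: "(nat \<Rightarrow> nat list) \<Rightarrow> nat \<Rightarrow> nat" where
  "tparent ch u = (THE v. u \<in> set (ch v))"

definition vcur :: "(nat \<Rightarrow> nat list) \<Rightarrow> nat \<Rightarrow> nat list" where
  "vcur ch v = kept (ch v)"

definition vapp :: "(nat \<Rightarrow> nat list) \<Rightarrow> nat \<Rightarrow> nat list" where
  "vapp ch v = (if \<exists>u. v \<in> set (ch u) then appended (ch (tparent ch v)) v else [])"

definition vchildren :: "(nat \<Rightarrow> nat list) \<Rightarrow> nat \<Rightarrow> nat list" where
  "vchildren ch v = vcur ch v @ vapp ch v"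

text \<open>Messages are triples (round, sender, receiver).\<close>

inductive bcast_msg :: "(nat \<Rightarrow> nat list) \<Rightarrow> (nat \<Rightarrow> nat list) \<Rightarrow> nat \<Rightarrow> nat \<Rightarrow> nat \<Rightarrow> bool"
  for C A :: "nat \<Rightarrow> nat list" where
  cur: "u \<in> set (C v) \<Longrightarrow> bcast_msg C A 1 v u"
| app: "bcast_msg C A t w v \<Longrightarrow> u \<in> set (A v) \<Longrightarrow> bcast_msg C A (Suc t) v u"

definition bcast_msgs :: "(nat \<Rightarrow> nat list) \<Rightarrow> (nat \<Rightarrow> nat list) \<Rightarrow> (nat \<times> nat \<times> nat) set" where
  "bcast_msgs C A = {(t, v, u). bcast_msg C A t v u}"

text \<open>Local reduce: a vertex u waits until it has received the (partial) reductions from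
  all its appended children, combines them with its own message and sends the result to
  its parent.  Hence u sends in round 1 + (height of u in the forest of appended edges).\<close>

inductive apath :: "(nat \<Rightarrow> nat list) \<Rightarrow> nat \<Rightarrow> nat \<Rightarrow> nat \<Rightarrow> bool" for A where
  refl: "apath A u 0 u"
| step: "apath A u k w \<Longrightarrow> w' \<in> set (A w) \<Longrightarrow> apath A u (Suc k) w'"

definition aheight :: "(nat \<Rightarrow> nat list) \<Rightarrow> nat \<Rightarrow> nat" where
  "aheight A u = Sup {k. \<exists>w. apath A u k w}"

definition reduce_msgs :: "(nat \<Rightarrow> nat list) \<Rightarrow> (nat \<Rightarrow> nat list) \<Rightarrow> (nat \<times> nat \<times> nat) set" where
  "reduce_msgs C A = {(Suc (aheight A u), u, v) | u v. u \<in> set (C v) \<or> u \<in> set (A v)}"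

definition msg_energy :: "(nat \<Rightarrow> nat \<times> nat) \<Rightarrow> (nat \<Rightarrow> nat) \<Rightarrow> (nat \<times> nat \<times> nat) set \<Rightarrow> nat" where
  "msg_energy K p M = (\<Sum>(t, v, u)\<in>M. manhattan (K (p v)) (K (p u)))"

definition msg_depth :: "(nat \<times> nat \<times> nat) set \<Rightarrow> nat" where
  "msg_depth M = Sup (fst ` M)"

end

theory Submission
  imports Defs
begin

(* The virtual tree is again a rooted tree on the same vertex set, now with at most four
   children per vertex, and it is stored in light-first order; so, by the energy-bound property
   of K for degree bound 4, one message along every virtual edge costs O(n) energy in total.
   Local reduce sends exactly one message along each virtual edge, and so does local broadcast,
   because virtual parents are unique and hence so is the round in which a vertex forwards the
   message.  A message of round t ends a chain of t - 1 appended edges.  Along an appended edge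
   the length of the sublist in whose regrouping a vertex is kept drops from m to at most
   (m - 1) / 2, so such chains have length at most log2 (n + 1), which bounds the depth. *)

section \<open>Regrouping sibling lists\<close>

(* For L = (c_1, ..., c_d) with d > 2: L ! 0 = c_1, regroup_pivot L = c_(floor(d/2)+1),
   regroup_left L = (c_2, ..., c_floor(d/2)) and regroup_right L = (c_(floor(d/2)+2), ..., c_d). *)

definition regroup_left :: "'a list \<Rightarrow> 'a list" where
  "regroup_left L = take (length L div 2 - 1) (drop 1 L)"

definition regroup_pivot :: "'a list \<Rightarrow> 'a" where
  "regroup_pivot L = L ! (length L div 2)"

definition regroup_right :: "'a list \<Rightarrow> 'a list" where
  "regroup_right L = drop (length L div 2 + 1) L"

lemma regroup_decomp:
  assumes "2 < length L"
  shows "L = L ! 0 # regroup_left L @ regroup_pivot L # regroup_right L"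
proof -
  let ?h = "length L div 2"
  have h: "1 \<le> ?h" "?h < length L" using assms by auto
  have "L = take ?h L @ L ! ?h # drop (Suc ?h) L" using h(2) by (rule id_take_nth_drop)
  moreover have "take ?h L = L ! 0 # take (?h - 1) (drop 1 L)"
    using h by (cases L; cases ?h) auto
  ultimately show ?thesis by (simp add: regroup_left_def regroup_pivot_def regroup_right_def)
qed

lemma set_regroup_decomp:
  "2 < length L \<Longrightarrow>
    set L = insert (L ! 0) (insert (regroup_pivot L)
      (set (regroup_left L) \<union> set (regroup_right L)))"
  by (metis regroup_decomp Un_insert_right list.simps(15) set_append)

lemma distinct_regroup_decomp:
  assumes "2 < length L" and "distinct L"
  shows "distinct (regroup_left L)" "distinct (regroup_right L)"
    "L ! 0 \<noteq> regroup_pivot L" "L ! 0 \<notin> set (regroup_left L)" "L ! 0 \<notin> set (regroup_right L)"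
    "regroup_pivot L \<notin> set (regroup_left L)" "regroup_pivot L \<notin> set (regroup_right L)"
    "set (regroup_left L) \<inter> set (regroup_right L) = {}"
proof -
  have "distinct (L ! 0 # regroup_left L @ regroup_pivot L # regroup_right L)"
    using assms regroup_decomp by metis
  then show "distinct (regroup_left L)" "distinct (regroup_right L)"
    "L ! 0 \<noteq> regroup_pivot L" "L ! 0 \<notin> set (regroup_left L)" "L ! 0 \<notin> set (regroup_right L)"
    "regroup_pivot L \<notin> set (regroup_left L)" "regroup_pivot L \<notin> set (regroup_right L)"
    "set (regroup_left L) \<inter> set (regroup_right L) = {}"
    by auto
qed

lemma length_regroup_parts:
  assumes "2 < length L"
  shows "2 * length (regroup_left L) < length L" "2 * length (regroup_right L) < length L"
  using assms by (auto simp: regroup_left_def regroup_right_def)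

lemma regroup_induct [case_names short split]:
  assumes "\<And>L. length L \<le> 2 \<Longrightarrow> P L"
    and "\<And>L. 2 < length L \<Longrightarrow> P (regroup_left L) \<Longrightarrow> P (regroup_right L) \<Longrightarrow> P L"
  shows "P L"
proof (induction L rule: length_induct)
  case (1 L)
  then show ?case
    using assms length_regroup_parts[of L] by (cases "length L \<le> 2") auto
qed

lemma kept_short: "length L \<le> 2 \<Longrightarrow> kept L = L"
  by (simp add: kept_def)

lemma kept_split: "2 < length L \<Longrightarrow> kept L = [L ! 0, regroup_pivot L]"
  by (simp add: kept_def regroup_pivot_def)

lemma appended_short: "length L \<le> 2 \<Longrightarrow> appended L x = []"
  by (subst appended.simps) simp

lemma appended_split:
  "2 < length L \<Longrightarrow> appended L x =
     (if x = L ! 0 then kept (regroup_left L)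
      else if x = regroup_pivot L then kept (regroup_right L)
      else appended (regroup_left L) x @ appended (regroup_right L) x)"
  by (subst appended.simps) (simp add: Let_def regroup_left_def regroup_pivot_def regroup_right_def)

lemma length_kept: "length (kept L) \<le> 2"
  by (simp add: kept_def)

lemma set_kept_subset: "set (kept L) \<subseteq> set L"
  by (cases "length L \<le> 2") (auto simp: kept_def intro!: nth_mem)

lemma distinct_kept: "distinct L \<Longrightarrow> distinct (kept L)"
  by (cases "length L \<le> 2") (auto simp: kept_short kept_split distinct_regroup_decomp)

lemma set_appended_subset: "set (appended L x) \<subseteq> set L"
proof (induction L rule: regroup_induct)
  case (short L)
  then show ?case by (simp add: appended_short)
next
  case (split L)
  then show ?case
    using set_regroup_decomp[OF split.hyps(1)] set_kept_subset[of "regroup_left L"]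
      set_kept_subset[of "regroup_right L"]
    by (auto simp: appended_split)
qed

lemma appended_notin: "x \<notin> set L \<Longrightarrow> appended L x = []"
proof (induction L rule: regroup_induct)
  case (short L)
  then show ?case by (simp add: appended_short)
next
  case (split L)
  then show ?case using set_regroup_decomp[OF split.hyps(1)] by (auto simp: appended_split)
qed

lemma mem_of_appended: "y \<in> set (appended L x) \<Longrightarrow> x \<in> set L"
  using appended_notin by fastforce

lemma appended_split_distinct:
  assumes "2 < length L" and "distinct L"
  shows "appended L x =
     (if x = L ! 0 then kept (regroup_left L)
      else if x = regroup_pivot L then kept (regroup_right L)
      else if x \<in> set (regroup_left L) then appended (regroup_left L) x
      else appended (regroup_right L) x)"
  using distinct_regroup_decomp[OF assms] appended_notin[of x "regroup_left L"]
    appended_notin[of x "regroup_right L"]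
  by (auto simp: appended_split[OF assms(1)])

lemma appended_eq_kept: "distinct L \<Longrightarrow> \<exists>M. distinct M \<and> appended L x = kept M"
proof (induction L rule: regroup_induct)
  case (short L)
  then show ?case by (intro exI[of _ "[]"]) (simp add: appended_short kept_def)
next
  case (split L)
  then show ?case
    using distinct_regroup_decomp[OF split.hyps(1) split.prems]
    by (auto simp: appended_split_distinct)
qed

lemma length_appended: "distinct L \<Longrightarrow> length (appended L x) \<le> 2"
  using appended_eq_kept length_kept by metis

lemma distinct_appended: "distinct L \<Longrightarrow> distinct (appended L x)"
  using appended_eq_kept distinct_kept by metis

lemma set_appended_split_subset:
  "2 < length L \<Longrightarrow> set (appended L x) \<subseteq> set (regroup_left L) \<union> set (regroup_right L)"
  using set_kept_subset[of "regroup_left L"] set_kept_subset[of "regroup_right L"]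
    set_appended_subset[of "regroup_left L" x] set_appended_subset[of "regroup_right L" x]
  by (auto simp: appended_split)

lemma kept_appended_disjoint:
  assumes "distinct L" and "y \<in> set (kept L)"
  shows "y \<notin> set (appended L x)"
proof (cases "length L \<le> 2")
  case False
  then show ?thesis
    using assms set_appended_split_subset[of L x] distinct_regroup_decomp[of L]
    by (auto simp: kept_split)
qed (simp add: appended_short)

lemma appended_inj:
  "distinct L \<Longrightarrow> y \<in> set (appended L x1) \<Longrightarrow> y \<in> set (appended L x2) \<Longrightarrow> x1 = x2"
proof (induction L arbitrary: x1 x2 rule: regroup_induct)
  case (short L)
  then show ?case by (simp add: appended_short)
next
  case (split L)
  let ?L1 = "regroup_left L" and ?L2 = "regroup_right L"
  note D = distinct_regroup_decomp[OF split.hyps(1) split.prems(1)]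
  have origin: "(x = L ! 0 \<and> y \<in> set (kept ?L1)) \<or> (x = regroup_pivot L \<and> y \<in> set (kept ?L2))
      \<or> (x \<in> set ?L1 \<and> y \<in> set (appended ?L1 x)) \<or> (x \<in> set ?L2 \<and> y \<in> set (appended ?L2 x))"
    if "y \<in> set (appended L x)" for x
    using that appended_notin[of x ?L2]
      appended_split_distinct[OF split.hyps(1) split.prems(1), of x]
    by (cases "x \<in> set ?L2") (auto split: if_splits)
  show ?case
    using origin[OF split.prems(2)] origin[OF split.prems(3)] D
      set_kept_subset[of ?L1] set_kept_subset[of ?L2]
      set_appended_subset[of ?L1] set_appended_subset[of ?L2]
      kept_appended_disjoint[OF D(1)] kept_appended_disjoint[OF D(2)]
      split.IH(1)[OF D(1)] split.IH(2)[OF D(2)]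
    by blast
qed

lemma appended_regroup_left:
  "2 < length L \<Longrightarrow> distinct L \<Longrightarrow> x \<in> set (regroup_left L) \<Longrightarrow>
    appended L x = appended (regroup_left L) x"
  using distinct_regroup_decomp[of L] by (auto simp: appended_split_distinct)

lemma appended_regroup_right:
  "2 < length L \<Longrightarrow> distinct L \<Longrightarrow> x \<in> set (regroup_right L) \<Longrightarrow>
    appended L x = appended (regroup_right L) x"
  using distinct_regroup_decomp[of L] by (auto simp: appended_split_distinct)

lemma reachable_from_kept:
  "distinct L \<Longrightarrow> x \<in> set L \<Longrightarrow>
    \<exists>z\<in>set (kept L). (z, x) \<in> {(a, b). b \<in> set (appended L a)}\<^sup>*"
proof (induction L arbitrary: x rule: regroup_induct)
  case (short L)
  then show ?case by (auto simp: kept_short)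
next
  case (split L)
  let ?L1 = "regroup_left L" and ?L2 = "regroup_right L"
  let ?R = "\<lambda>L. {(a, b). b \<in> set (appended L a)}"
  note D = distinct_regroup_decomp[OF split.hyps(1) split.prems(1)]
  have R1: "?R ?L1 \<subseteq> ?R L"
    using mem_of_appended appended_regroup_left[OF split.hyps(1) split.prems(1)] by fastforce
  have R2: "?R ?L2 \<subseteq> ?R L"
    using mem_of_appended appended_regroup_right[OF split.hyps(1) split.prems(1)] by fastforce
  have "(L ! 0, x) \<in> (?R L)\<^sup>*" if x: "x \<in> set ?L1"
  proof -
    obtain z where "z \<in> set (kept ?L1)" and "(z, x) \<in> (?R ?L1)\<^sup>*"
      using split.IH(1)[OF D(1) x] by blast
    moreover have "(L ! 0, z) \<in> ?R L" if "z \<in> set (kept ?L1)"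
      using that by (simp add: appended_split[OF split.hyps(1)])
    ultimately show ?thesis
      using rtrancl_mono[OF R1] by (blast intro: converse_rtrancl_into_rtrancl)
  qed
  moreover have "(regroup_pivot L, x) \<in> (?R L)\<^sup>*" if x: "x \<in> set ?L2"
  proof -
    obtain z where "z \<in> set (kept ?L2)" and "(z, x) \<in> (?R ?L2)\<^sup>*"
      using split.IH(2)[OF D(2) x] by blast
    moreover have "(regroup_pivot L, z) \<in> ?R L" if "z \<in> set (kept ?L2)"
      using that D(3) by (simp add: appended_split[OF split.hyps(1)])
    ultimately show ?thesis
      using rtrancl_mono[OF R2] by (blast intro: converse_rtrancl_into_rtrancl)
  qed
  ultimately show ?case
    using split.prems(2) set_regroup_decomp[OF split.hyps(1)]
    by (auto simp: kept_split[OF split.hyps(1)])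
qed

(* The length of the sublist of L in whose regrouping x is one of the two kept elements. *)

function block_size :: "'a list \<Rightarrow> 'a \<Rightarrow> nat" where
  "block_size L x =
     (if length L \<le> 2 \<or> x = L ! 0 \<or> x = regroup_pivot L then length L
      else if x \<in> set (regroup_left L) then block_size (regroup_left L) x
      else block_size (regroup_right L) x)"
  by pat_completeness auto
termination
  by (relation "measure (length \<circ> fst)") (auto simp: regroup_left_def regroup_right_def)

declare block_size.simps [simp del]

lemma block_size_le_length: "block_size L x \<le> length L"
proof (induction L rule: regroup_induct)
  case (short L)
  then show ?case by (simp add: block_size.simps)
next
  case (split L)
  then show ?case
    using length_regroup_parts[OF split.hyps(1)] by (subst block_size.simps) auto
qed

lemma block_size_kept: "y \<in> set (kept L) \<Longrightarrow> block_size L y = length L"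
  by (subst block_size.simps) (auto simp: kept_def regroup_pivot_def)

lemma block_size_regroup_left:
  "2 < length L \<Longrightarrow> distinct L \<Longrightarrow> y \<in> set (regroup_left L) \<Longrightarrow>
    block_size L y = block_size (regroup_left L) y"
  using distinct_regroup_decomp[of L] by (subst block_size.simps) auto

lemma block_size_regroup_right:
  "2 < length L \<Longrightarrow> distinct L \<Longrightarrow> y \<in> set (regroup_right L) \<Longrightarrow>
    block_size L y = block_size (regroup_right L) y"
  using distinct_regroup_decomp[of L] by (subst block_size.simps) auto

lemma block_size_kept_regroup_left:
  assumes "2 < length L" and "distinct L" and "y \<in> set (kept (regroup_left L))"
  shows "block_size L y = length (regroup_left L)"
proof -
  have "y \<in> set (regroup_left L)" using assms(3) by (rule subsetD[OF set_kept_subset])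
  then show ?thesis using assms by (simp add: block_size_regroup_left block_size_kept)
qed

lemma block_size_kept_regroup_right:
  assumes "2 < length L" and "distinct L" and "y \<in> set (kept (regroup_right L))"
  shows "block_size L y = length (regroup_right L)"
proof -
  have "y \<in> set (regroup_right L)" using assms(3) by (rule subsetD[OF set_kept_subset])
  then show ?thesis using assms by (simp add: block_size_regroup_right block_size_kept)
qed

lemma block_size_appended:
  "distinct L \<Longrightarrow> y \<in> set (appended L x) \<Longrightarrow> 2 * block_size L y + 1 \<le> block_size L x"
proof (induction L arbitrary: x rule: regroup_induct)
  case (short L)
  then show ?case by (simp add: appended_short)
next
  case (split L)
  let ?L1 = "regroup_left L" and ?L2 = "regroup_right L"
  note long = split.hyps(1) and dist = split.prems(1) and y = split.prems(2)
  note D = distinct_regroup_decomp[OF long dist]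
  have x_block: "block_size L x = length L" if "x = L ! 0 \<or> x = regroup_pivot L"
    using that by (subst block_size.simps) simp
  consider "x = L ! 0" | "x = regroup_pivot L" | "x \<in> set ?L1" "x \<noteq> L ! 0" "x \<noteq> regroup_pivot L"
    | "x \<in> set ?L2" "x \<noteq> L ! 0" "x \<noteq> regroup_pivot L"
    using mem_of_appended[OF y] set_regroup_decomp[OF long] by auto
  then show ?case
  proof cases
    case 1
    then have "y \<in> set (kept ?L1)" using y by (simp add: appended_split_distinct[OF long dist])
    then show ?thesis
      using x_block 1 length_regroup_parts[OF long]
      by (simp add: block_size_kept_regroup_left[OF long dist])
  next
    case 2
    then have "y \<in> set (kept ?L2)" using y D by (simp add: appended_split_distinct[OF long dist])
    then show ?thesis
      using x_block 2 length_regroup_parts[OF long]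
      by (simp add: block_size_kept_regroup_right[OF long dist])
  next
    case 3
    then have "y \<in> set (appended ?L1 x)" using y by (simp add: appended_regroup_left[OF long dist])
    moreover from this have "y \<in> set ?L1" by (rule subsetD[OF set_appended_subset])
    ultimately show ?thesis
      using split.IH(1)[OF D(1)] 3 by (simp add: block_size_regroup_left[OF long dist])
  next
    case 4
    then have "y \<in> set (appended ?L2 x)" using y by (simp add: appended_regroup_right[OF long dist])
    moreover from this have "y \<in> set ?L2" by (rule subsetD[OF set_appended_subset])
    ultimately show ?thesis
      using split.IH(2)[OF D(2)] 4 by (simp add: block_size_regroup_right[OF long dist])
  qed
qed

section \<open>Energy and depth of local messaging\<close>

lemma rooted_tree_parent_unique:
  "rooted_tree V r ch \<Longrightarrow> u \<in> set (ch v) \<Longrightarrow> u \<in> set (ch w) \<Longrightarrow> v = w"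
  unfolding rooted_tree_def by blast

lemma rooted_tree_parent_mem: "rooted_tree V r ch \<Longrightarrow> u \<in> set (ch v) \<Longrightarrow> v \<in> V"
  unfolding rooted_tree_def by (metis empty_iff empty_set)

lemma rooted_tree_card_pos: "rooted_tree V r ch \<Longrightarrow> 0 < card V"
  unfolding rooted_tree_def using card_gt_0_iff by blast

lemma tparent_eq: "rooted_tree V r ch \<Longrightarrow> u \<in> set (ch v) \<Longrightarrow> tparent ch u = v"
  unfolding tparent_def by (blast intro: rooted_tree_parent_unique)

lemma manhattan_commute: "manhattan a b = manhattan b a"
  by (simp add: manhattan_def abs_minus_commute)

lemma msg_energy_le_tree_energy:
  assumes "finite V" and "inj_on e M" and "e ` M \<subseteq> Sigma V (\<lambda>v. set (ch v))"
    and "\<And>t v u. (t, v, u) \<in> M \<Longrightarrow>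
      manhattan (K (p v)) (K (p u)) = (case e (t, v, u) of (a, b) \<Rightarrow> manhattan (K (p a)) (K (p b)))"
  shows "msg_energy K p M \<le> tree_energy K V ch p"
proof -
  let ?cost = "\<lambda>(a, b). manhattan (K (p a)) (K (p b))"
  have "msg_energy K p M = sum (?cost \<circ> e) M"
    unfolding msg_energy_def using assms(4) by (intro sum.cong) auto
  also have "\<dots> = sum ?cost (e ` M)" by (rule sum.reindex[OF assms(2), symmetric])
  also have "\<dots> \<le> sum ?cost (Sigma V (\<lambda>v. set (ch v)))"
    using assms(1,3) by (intro sum_mono2) auto
  also have "\<dots> = tree_energy K V ch p"
    unfolding tree_energy_def using assms(1) by (simp add: sum.Sigma)
  finally show ?thesis .
qed

lemma bcast_msg_edge: "bcast_msg C A t v u \<Longrightarrow> u \<in> set (C v @ A v)"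
  by (induction rule: bcast_msg.induct) auto

lemma bcast_msg_apath: "bcast_msg C A t v u \<Longrightarrow> 0 < t \<and> (\<exists>x. apath A x (t - 1) u)"
proof (induction rule: bcast_msg.induct)
  case (cur u v)
  then show ?case using apath.refl by auto
next
  case (app t w v u)
  then obtain x where "apath A x (t - 1) v" and "0 < t" by blast
  then show ?case using apath.step[of A x "t - 1" v u] app.hyps(2) by auto
qed

lemma bcast_msg_round_unique:
  assumes tree: "rooted_tree V r (\<lambda>v. C v @ A v)"
  shows "bcast_msg C A t v u \<Longrightarrow> bcast_msg C A t' v u \<Longrightarrow> t = t'"
proof (induction arbitrary: t' rule: bcast_msg.induct)
  case (cur u v)
  have "set (C v) \<inter> set (A v) = {}" using tree by (simp add: rooted_tree_def)
  with cur.prems show ?case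
    by cases (use cur.hyps in auto)
next
  case (app t w v u)
  have disjoint: "set (C v) \<inter> set (A v) = {}" using tree by (simp add: rooted_tree_def)
  from app.prems show ?case
  proof cases
    case cur
    then show ?thesis using disjoint app.hyps(2) by auto
  next
    case (app s w')
    have "w = w'"
      using rooted_tree_parent_unique[OF tree] bcast_msg_edge[OF app.hyps(1)]
        bcast_msg_edge[OF app(2)] by blast
    then show ?thesis using app.IH app(1,2) by simp
  qed
qed

lemma bcast_energy_le:
  assumes tree: "rooted_tree V r (\<lambda>v. C v @ A v)"
  shows "msg_energy K p (bcast_msgs C A) \<le> tree_energy K V (\<lambda>v. C v @ A v) p"
proof (rule msg_energy_le_tree_energy[where e = "\<lambda>(t, v, u). (v, u)"])
  show "finite V" using tree by (simp add: rooted_tree_def)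
  show "inj_on (\<lambda>(t, v, u). (v, u)) (bcast_msgs C A)"
    using bcast_msg_round_unique[OF tree] by (auto simp: inj_on_def bcast_msgs_def)
  show "(\<lambda>(t, v, u). (v, u)) ` bcast_msgs C A \<subseteq> Sigma V (\<lambda>v. set (C v @ A v))"
    using bcast_msg_edge rooted_tree_parent_mem[OF tree] by (fastforce simp: bcast_msgs_def)
qed auto

lemma reduce_energy_le:
  assumes tree: "rooted_tree V r (\<lambda>v. C v @ A v)"
  shows "msg_energy K p (reduce_msgs C A) \<le> tree_energy K V (\<lambda>v. C v @ A v) p"
proof (rule msg_energy_le_tree_energy[where e = "\<lambda>(t, u, v). (v, u)"])
  show "finite V" using tree by (simp add: rooted_tree_def)
  show "inj_on (\<lambda>(t, u, v). (v, u)) (reduce_msgs C A)"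
    by (auto simp: inj_on_def reduce_msgs_def)
  show "(\<lambda>(t, u, v). (v, u)) ` reduce_msgs C A \<subseteq> Sigma V (\<lambda>v. set (C v @ A v))"
    using rooted_tree_parent_mem[OF tree] by (fastforce simp: reduce_msgs_def)
qed (simp add: manhattan_commute)

lemma msg_depth_le_log:
  assumes N: "0 < N" and bound: "\<And>m. m \<in> M \<Longrightarrow> 2 ^ (fst m - 1) \<le> N + 1"
  shows "real (msg_depth M) \<le> 2 * (1 + log 2 (real N))"
proof (cases "M = {}")
  case True
  then show ?thesis using N by (simp add: msg_depth_def)
next
  case False
  have "t \<le> N + 1" if "t \<in> fst ` M" for t
  proof -
    have "t - 1 < 2 ^ (t - 1)" by (rule less_exp)
    also have "\<dots> \<le> N + 1" using that bound by auto
    finally show ?thesis by simp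
  qed
  then have "finite (fst ` M)" by (meson finite_atMost finite_subset atMost_iff subsetI)
  then have "msg_depth M \<in> fst ` M"
    using False by (simp add: msg_depth_def cSup_eq_Max)
  then have "2 ^ (msg_depth M - 1) \<le> 2 * N" using bound N by force
  then have "real (msg_depth M - 1) \<le> log 2 (real (2 * N))" by (rule le_log2_of_power)
  also have "\<dots> = 1 + log 2 (real N)" using N by (simp add: log_mult_pos)
  finally have "real (msg_depth M) \<le> 2 + log 2 (real N)" by linarith
  moreover have "0 \<le> log 2 (real N)" using N by simp
  ultimately show ?thesis by (simp add: distrib_left)
qed

lemma apath_aheight:
  assumes "\<And>k w. apath A u k w \<Longrightarrow> k \<le> B"
  shows "\<exists>w. apath A u (aheight A u) w"
proof -
  let ?S = "{k. \<exists>w. apath A u k w}"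
  have "?S \<subseteq> {..B}" using assms by auto
  then have "finite ?S" by (rule finite_subset) simp
  moreover have "?S \<noteq> {}" using apath.refl by blast
  ultimately have "Max ?S \<in> ?S" by (rule Max_in)
  then show ?thesis using \<open>finite ?S\<close> \<open>?S \<noteq> {}\<close> by (simp add: aheight_def cSup_eq_Max)
qed

lemma apath_potential:
  fixes A :: "nat \<Rightarrow> nat list" and f :: "nat \<Rightarrow> nat"
  assumes "\<And>x y. y \<in> set (A x) \<Longrightarrow> 2 * f y + 1 \<le> f x"
  shows "apath A x k w \<Longrightarrow> 2 ^ k * (f w + 1) \<le> f x + 1"
proof (induction rule: apath.induct)
  case refl
  then show ?case by simp
next
  case (step x k w w')
  have "2 ^ Suc k * (f w' + 1) = 2 ^ k * (2 * f w' + 2)" by simp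
  also have "\<dots> \<le> 2 ^ k * (f w + 1)" using assms[OF step.hyps(2)] by (intro mult_le_mono2) simp
  also have "\<dots> \<le> f x + 1" by (rule step.IH)
  finally show ?case .
qed

lemma bcast_depth_le:
  assumes "0 < N" and bound: "\<And>x k w. apath A x k w \<Longrightarrow> 2 ^ k \<le> N + 1"
  shows "real (msg_depth (bcast_msgs C A)) \<le> 2 * (1 + log 2 (real N))"
  using assms(1)
proof (rule msg_depth_le_log)
  fix m
  assume "m \<in> bcast_msgs C A"
  then obtain t v u where m: "m = (t, v, u)" and "bcast_msg C A t v u"
    by (auto simp: bcast_msgs_def)
  then obtain x where "apath A x (t - 1) u" using bcast_msg_apath by blast
  then show "2 ^ (fst m - 1) \<le> N + 1" using m bound by simp
qed

lemma reduce_depth_le: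
  assumes "0 < N" and bound: "\<And>x k w. apath A x k w \<Longrightarrow> 2 ^ k \<le> N + 1"
  shows "real (msg_depth (reduce_msgs C A)) \<le> 2 * (1 + log 2 (real N))"
  using assms(1)
proof (rule msg_depth_le_log)
  fix m
  assume "m \<in> reduce_msgs C A"
  then obtain u where m: "fst m = Suc (aheight A u)" by (auto simp: reduce_msgs_def)
  have "k \<le> N" if "apath A u k w" for k w
  proof -
    have "k < 2 ^ k" by (rule less_exp)
    also have "\<dots> \<le> N + 1" using that by (rule bound)
    finally show ?thesis by simp
  qed
  then obtain w where "apath A u (aheight A u) w" using apath_aheight by blast
  then show "2 ^ (fst m - 1) \<le> N + 1" using m bound by simp
qed

section \<open>The virtual tree\<close>

lemma vchildren_conv: "vchildren ch = (\<lambda>v. vcur ch v @ vapp ch v)"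
  by (simp add: vchildren_def fun_eq_iff)

(* A potential that more than halves along every appended edge. *)

definition vweight :: "(nat \<Rightarrow> nat list) \<Rightarrow> nat \<Rightarrow> nat" where
  "vweight ch v = (if \<exists>u. v \<in> set (ch u) then block_size (ch (tparent ch v)) v else 0)"

context
  fixes V r ch
  assumes tree: "rooted_tree V r ch"
begin

lemma distinct_ch: "distinct (ch v)"
  using tree by (simp add: rooted_tree_def)

lemma set_ch_subset: "set (ch v) \<subseteq> V"
  using tree by (simp add: rooted_tree_def)

lemma vapp_eq_appended: "u \<in> set (ch v) \<Longrightarrow> vapp ch u = appended (ch v) u"
  using tparent_eq[OF tree] by (auto simp: vapp_def)

lemma vweight_eq: "u \<in> set (ch v) \<Longrightarrow> vweight ch u = block_size (ch v) u"
  using tparent_eq[OF tree] by (auto simp: vweight_def)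

lemma mem_vapp_iff:
  "u \<in> set (vapp ch v) \<longleftrightarrow> (\<exists>p. v \<in> set (ch p) \<and> u \<in> set (appended (ch p) v))"
proof (cases "\<exists>p. v \<in> set (ch p)")
  case True
  then obtain p where p: "v \<in> set (ch p)" by blast
  then have "v \<in> set (ch q) \<longleftrightarrow> q = p" for q using rooted_tree_parent_unique[OF tree] by blast
  then show ?thesis by (simp add: vapp_eq_appended[OF p])
qed (simp add: vapp_def)

lemma mem_vchildren_iff:
  "u \<in> set (vchildren ch v) \<longleftrightarrow>
    u \<in> set (kept (ch v)) \<or> (\<exists>p. v \<in> set (ch p) \<and> u \<in> set (appended (ch p) v))"
  by (simp add: vchildren_def vcur_def mem_vapp_iff)

lemma mem_vchildren_tree_child:
  assumes "u \<in> set (vchildren ch v)"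
  obtains p where "u \<in> set (ch p)"
    and "v = p \<and> u \<in> set (kept (ch p)) \<or> v \<in> set (ch p) \<and> u \<in> set (appended (ch p) v)"
proof -
  consider "u \<in> set (kept (ch v))" | p where "v \<in> set (ch p)" "u \<in> set (appended (ch p) v)"
    using assms unfolding mem_vchildren_iff by blast
  then show ?thesis
  proof cases
    case 1
    then show ?thesis using that subsetD[OF set_kept_subset 1] by blast
  next
    case (2 p)
    then show ?thesis using that[of p] subsetD[OF set_appended_subset 2(2)] by blast
  qed
qed

lemma vchildren_parent_unique:
  assumes "u \<in> set (vchildren ch v)" and "u \<in> set (vchildren ch w)"
  shows "v = w"
proof -
  obtain p where p: "u \<in> set (ch p)"
    and v: "v = p \<and> u \<in> set (kept (ch p)) \<or> v \<in> set (ch p) \<and> u \<in> set (appended (ch p) v)"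
    using assms(1) by (rule mem_vchildren_tree_child)
  obtain q where q: "u \<in> set (ch q)"
    and w: "w = q \<and> u \<in> set (kept (ch q)) \<or> w \<in> set (ch q) \<and> u \<in> set (appended (ch q) w)"
    using assms(2) by (rule mem_vchildren_tree_child)
  have "q = p" using rooted_tree_parent_unique[OF tree p q] by simp
  then show ?thesis
    using v w kept_appended_disjoint[OF distinct_ch] appended_inj[OF distinct_ch] by metis
qed

lemma length_vchildren: "length (vchildren ch v) \<le> 4"
proof -
  have "length (vapp ch v) \<le> 2"
    by (simp add: vapp_def length_appended distinct_ch)
  then show ?thesis using length_kept[of "ch v"] by (simp add: vchildren_def vcur_def)
qed

lemma distinct_vchildren: "distinct (vchildren ch v)"
proof -
  have "u \<notin> set (vapp ch v)" if u: "u \<in> set (kept (ch v))" for u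
  proof
    assume "u \<in> set (vapp ch v)"
    then obtain p where "v \<in> set (ch p)" and app: "u \<in> set (appended (ch p) v)"
      by (auto simp: mem_vapp_iff)
    moreover have "p = v"
      using rooted_tree_parent_unique[OF tree] subsetD[OF set_appended_subset app]
        subsetD[OF set_kept_subset u] by blast
    ultimately show False using kept_appended_disjoint[OF distinct_ch u] by simp
  qed
  then show ?thesis
    by (auto simp: vchildren_def vcur_def vapp_def distinct_kept distinct_appended distinct_ch)
qed

lemma set_vchildren_subset: "set (vchildren ch v) \<subseteq> V"
  using set_ch_subset by (blast elim: mem_vchildren_tree_child)

lemma vchildren_outside:
  assumes "v \<notin> V"
  shows "vchildren ch v = []"
proof -
  have "ch v = []" using tree assms by (simp add: rooted_tree_def)
  moreover have "u \<notin> set (vapp ch v)" for u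
    using assms set_ch_subset by (auto simp: mem_vapp_iff)
  then have "vapp ch v = []" by (metis last_in_set)
  ultimately show ?thesis by (simp add: vchildren_def vcur_def kept_def)
qed

lemma root_notin_vchildren: "r \<notin> set (vchildren ch v)"
  using tree by (auto simp: rooted_tree_def elim: mem_vchildren_tree_child)

lemma tree_edges_subset_rtrancl_vchildren: "tree_edges ch \<subseteq> (tree_edges (vchildren ch))\<^sup>*"
proof clarify
  fix v u
  assume "(v, u) \<in> tree_edges ch"
  then have "u \<in> set (ch v)" by (simp add: tree_edges_def)
  then obtain z where z: "z \<in> set (kept (ch v))"
    and "(z, u) \<in> {(a, b). b \<in> set (appended (ch v) a)}\<^sup>*"
    using reachable_from_kept[OF distinct_ch] by blast
  moreover have "{(a, b). b \<in> set (appended (ch v) a)} \<subseteq> tree_edges (vchildren ch)"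
    using mem_of_appended by (fastforce simp: tree_edges_def mem_vchildren_iff)
  ultimately have "(z, u) \<in> (tree_edges (vchildren ch))\<^sup>*"
    using rtrancl_mono by blast
  moreover have "(v, z) \<in> tree_edges (vchildren ch)"
    using z by (simp add: tree_edges_def mem_vchildren_iff)
  ultimately show "(v, u) \<in> (tree_edges (vchildren ch))\<^sup>*" by simp
qed

lemma rooted_tree_vchildren: "rooted_tree V r (vchildren ch)"
proof -
  have reach: "(r, u) \<in> (tree_edges (vchildren ch))\<^sup>*" if "u \<in> V" for u
    using tree that rtrancl_subset_rtrancl[OF tree_edges_subset_rtrancl_vchildren]
    unfolding rooted_tree_def by blast
  have "\<exists>!v. u \<in> set (vchildren ch v)" if "u \<in> V - {r}" for u
  proof -
    from that have "(r, u) \<in> (tree_edges (vchildren ch))\<^sup>*" and "u \<noteq> r" by (auto intro: reach)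
    then obtain v where "(v, u) \<in> tree_edges (vchildren ch)" by (auto elim: rtranclE)
    then show ?thesis using vchildren_parent_unique by (auto simp: tree_edges_def)
  qed
  moreover have "finite V" and "r \<in> V" using tree by (simp_all add: rooted_tree_def)
  ultimately show ?thesis
    unfolding rooted_tree_def
    using reach distinct_vchildren set_vchildren_subset vchildren_outside root_notin_vchildren
    by blast
qed

lemma vweight_le_card: "vweight ch v \<le> card V"
proof (cases "\<exists>p. v \<in> set (ch p)")
  case True
  then obtain p where p: "v \<in> set (ch p)" by blast
  have "vweight ch v \<le> length (ch p)" by (simp add: vweight_eq[OF p] block_size_le_length)
  also have "\<dots> = card (set (ch p))" by (simp add: distinct_card[OF distinct_ch])
  also have "\<dots> \<le> card V"
    using tree set_ch_subset by (intro card_mono) (auto simp: rooted_tree_def)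
  finally show ?thesis .
qed (simp add: vweight_def)

lemma vweight_vapp: "u \<in> set (vapp ch v) \<Longrightarrow> 2 * vweight ch u + 1 \<le> vweight ch v"
proof -
  assume u: "u \<in> set (vapp ch v)"
  then obtain p where p: "v \<in> set (ch p)" by (auto simp: vapp_def split: if_splits)
  then have app: "u \<in> set (appended (ch p) v)" using u by (simp add: vapp_eq_appended)
  then have "u \<in> set (ch p)" by (rule subsetD[OF set_appended_subset])
  then show ?thesis
    using block_size_appended[OF distinct_ch app] by (simp add: vweight_eq[OF p] vweight_eq)
qed

lemma apath_vapp_bound:
  assumes "apath (vapp ch) x k w"
  shows "2 ^ k \<le> card V + 1"
proof -
  have "2 ^ k \<le> 2 ^ k * (vweight ch w + 1)" by simp
  also have "\<dots> \<le> vweight ch x + 1" using assms by (metis apath_potential vweight_vapp)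
  also have "\<dots> \<le> card V + 1" using vweight_le_card by simp
  finally show ?thesis .
qed

lemma virtual_tree_messaging_bounds:
  assumes "real (tree_energy K V (vchildren ch) p) \<le> c * real (card V)" and "2 \<le> c"
  shows "real (msg_energy K p (bcast_msgs (vcur ch) (vapp ch))) \<le> c * real (card V) \<and>
    real (msg_depth (bcast_msgs (vcur ch) (vapp ch))) \<le> c * (1 + log 2 (real (card V))) \<and>
    real (msg_energy K p (reduce_msgs (vcur ch) (vapp ch))) \<le> c * real (card V) \<and>
    real (msg_depth (reduce_msgs (vcur ch) (vapp ch))) \<le> c * (1 + log 2 (real (card V)))"
proof -
  have vtree: "rooted_tree V r (\<lambda>v. vcur ch v @ vapp ch v)"
    using rooted_tree_vchildren by (simp add: vchildren_conv)
  have N: "0 < card V" using tree by (rule rooted_tree_card_pos)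
  have energy: "real (tree_energy K V (\<lambda>v. vcur ch v @ vapp ch v) p) \<le> c * real (card V)"
    using assms(1) by (simp add: vchildren_conv)
  have depth: "2 * (1 + log 2 (real (card V))) \<le> c * (1 + log 2 (real (card V)))"
    using N assms(2) by (intro mult_right_mono) auto
  have "real (msg_depth (bcast_msgs (vcur ch) (vapp ch))) \<le> 2 * (1 + log 2 (real (card V)))"
    using N apath_vapp_bound by (rule bcast_depth_le)
  moreover have
    "real (msg_depth (reduce_msgs (vcur ch) (vapp ch))) \<le> 2 * (1 + log 2 (real (card V)))"
    using N apath_vapp_bound by (rule reduce_depth_le)
  ultimately show ?thesis
    using energy depth
      of_nat_mono[OF bcast_energy_le[OF vtree, of K p], where 'a = real]
      of_nat_mono[OF reduce_energy_le[OF vtree, of K p], where 'a = real]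
    by linarith
qed

end

theorem mainTheorem6:
  fixes K :: "nat \<Rightarrow> nat \<times> nat"
  assumes "bij K"
    and "energy_bound K"
  shows "\<exists>c::real. \<forall>V r ch p.
           rooted_tree V r ch \<and> light_first V (vchildren ch) p \<longrightarrow>
             real (msg_energy K p (bcast_msgs (vcur ch) (vapp ch))) \<le> c * real (card V) \<and>
             real (msg_depth (bcast_msgs (vcur ch) (vapp ch))) \<le> c * (1 + log 2 (real (card V))) \<and>
             real (msg_energy K p (reduce_msgs (vcur ch) (vapp ch))) \<le> c * real (card V) \<and>
             real (msg_depth (reduce_msgs (vcur ch) (vapp ch))) \<le> c * (1 + log 2 (real (card V)))"
proof -
  obtain c0 :: real where c0: "\<And>V r ch p. rooted_tree V r ch \<and> (\<forall>v. length (ch v) \<le> 4) \<and>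
      light_first V ch p \<Longrightarrow> real (tree_energy K V ch p) \<le> c0 * real (card V)"
    using assms(2) unfolding energy_bound_def by blast
  have energy: "real (tree_energy K V (vchildren ch) p) \<le> max c0 2 * real (card V)"
    if "rooted_tree V r ch" and "light_first V (vchildren ch) p" for V r ch p
  proof -
    have "real (tree_energy K V (vchildren ch) p) \<le> c0 * real (card V)"
      using c0 rooted_tree_vchildren[OF that(1)] length_vchildren[OF that(1)] that(2) by blast
    also have "\<dots> \<le> max c0 2 * real (card V)" by (intro mult_right_mono) auto
    finally show ?thesis .
  qed
  show ?thesis
    by (intro exI[of _ "max c0 2"] allI impI, elim conjE, rule virtual_tree_messaging_bounds)
      (auto intro: energy)
qed

end
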